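(* Let $G$ be a graph that has exactly three odd cycles. Then the intersection of every two of its odd cycles is either empty or a path.
   Context: All graphs are finite and simple. An odd cycle is a cycle (subgraph) of odd length. A path may consist of a single vertex. *)

theory Defs
  imports Main
begin

definition simple_graph :: "'a set \<Rightarrow> 'a set set \<Rightarrow> bool" where
  "simple_graph V E \<longleftrightarrow> finite V \<and>
     (\<forall>e\<in>E. \<exists>u v. u \<noteq> v \<and> u \<in> V \<and> v \<in> V \<and> e = {u, v})"

definition subgraph :: "('a set \<times> 'a set set) \<Rightarrow> ('a set \<times> 'a set set) \<Rightarrow> bool" where
  "subgraph H G \<longleftrightarrow> fst H \<subseteq> fst G \<and> snd H \<subseteq> snd G"

definition cycle_graph :: "'a list \<Rightarrow> ('a set \<times> 'a set set)" where
  "cycle_graph vs = (set vs, {{vs ! i, vs ! ((i + 1) mod length vs)} | i. i < length vs})"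

definition is_odd_cycle :: "('a set \<times> 'a set set) \<Rightarrow> bool" where
  "is_odd_cycle H \<longleftrightarrow> (\<exists>vs. distinct vs \<and> length vs \<ge> 3 \<and> odd (length vs) \<and> H = cycle_graph vs)"

definition odd_cycles :: "'a set \<Rightarrow> 'a set set \<Rightarrow> ('a set \<times> 'a set set) set" where
  "odd_cycles V E = {H. subgraph H (V, E) \<and> is_odd_cycle H}"

definition path_graph :: "'a list \<Rightarrow> ('a set \<times> 'a set set)" where
  "path_graph vs = (set vs, {{vs ! i, vs ! Suc i} | i. Suc i < length vs})"

definition is_path :: "('a set \<times> 'a set set) \<Rightarrow> bool" where
  "is_path H \<longleftrightarrow> (\<exists>vs. distinct vs \<and> vs \<noteq> [] \<and> H = path_graph vs)"

definition graph_inter :: "('a set \<times> 'a set set) \<Rightarrow> ('a set \<times> 'a set set) \<Rightarrow> ('a set \<times> 'a set set)" where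
  "graph_inter H1 H2 = (fst H1 \<inter> fst H2, snd H1 \<inter> snd H2)"

end

(* Let C1 and C2 be distinct odd cycles that meet. Cut C2 at its vertices on C1: a detour is a
   stretch of C2 that leaves C1 along an edge not in C1 and returns to C1, meeting C1 only at its
   two ends. If the ends differ, the detour together with the arc of C1 between them of the right
   parity is an odd cycle containing the detour. Two edge-disjoint detours with distinct ends thus
   give two odd cycles different from each other and from C1 and C2. With only three odd cycles
   this is impossible, so the edges of C2 outside C1 form a single detour, and the intersection
   of C1 and C2 is the path formed by the remaining edges of C2. *)

theory Submission
  imports Defs "HOL-Number_Theory.Cong"
begin

section \<open>Paths given by lists\<close>

fun path_edges :: "'a list \<Rightarrow> 'a set set" where
  "path_edges (x # y # vs) = insert {x, y} (path_edges (y # vs))"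
| "path_edges _ = {}"

lemma path_edges_conv_nth: "path_edges vs = (\<lambda>k. {vs ! k, vs ! Suc k}) ` {k. Suc k < length vs}"
proof (induction vs rule: path_edges.induct)
  case (1 x y vs)
  have "{k. Suc k < length (x # y # vs)} = insert 0 (Suc ` {k. Suc k < length (y # vs)})"
    by (auto simp: image_iff less_Suc_eq_0_disj)
  then show ?case using "1.IH" by (simp add: image_image)
qed auto

lemma path_graph_eq: "path_graph vs = (set vs, path_edges vs)"
  by (auto simp: path_graph_def path_edges_conv_nth)

lemma path_edges_append: "path_edges (us @ x # vs) = path_edges (us @ [x]) \<union> path_edges (x # vs)"
  by (induction us rule: path_edges.induct) auto

lemma path_edges_rev: "path_edges (rev vs) = path_edges vs"
proof (induction vs rule: path_edges.induct)
  case (1 x y vs)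
  have "path_edges (rev (x # y # vs)) = path_edges (rev (y # vs)) \<union> path_edges [y, x]"
    using path_edges_append[of "rev vs" y "[x]"] by simp
  then show ?case using "1.IH" by (simp add: insert_commute)
qed auto

lemma path_edges_map_upt:
  "path_edges (map f [i..<Suc j]) = (\<lambda>k. {f k, f (Suc k)}) ` {i..<j}"
proof (induction j)
  case (Suc j)
  show ?case
  proof (cases "i \<le> j")
    case True
    have "map f [i..<Suc (Suc j)] = map f [i..<j] @ f j # [f (Suc j)]"
      using True by simp
    moreover have "map f [i..<Suc j] = map f [i..<j] @ [f j]"
      using True by simp
    ultimately have
      "path_edges (map f [i..<Suc (Suc j)]) = path_edges (map f [i..<Suc j]) \<union> {{f j, f (Suc j)}}"
      using path_edges_append[of "map f [i..<j]" "f j" "[f (Suc j)]"] by simp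
    moreover have "{i..<Suc j} = insert j {i..<j}" using True by auto
    ultimately show ?thesis using Suc.IH by auto
  next
    case False
    then have "[i..<Suc (Suc j)] = [] \<or> [i..<Suc (Suc j)] = [Suc j]" by auto
    then show ?thesis using False by auto
  qed
qed simp

definition path_from_to :: "'a list \<Rightarrow> 'a \<Rightarrow> 'a \<Rightarrow> bool" where
  "path_from_to P a b \<longleftrightarrow> distinct P \<and> P \<noteq> [] \<and> hd P = a \<and> last P = b"

lemma path_from_to_length: "path_from_to P a b \<Longrightarrow> a \<noteq> b \<Longrightarrow> 2 \<le> length P"
  by (cases P rule: remdups_adj.cases) (auto simp: path_from_to_def)

section \<open>Cycles indexed modulo their length\<close>

definition cycle_vertex :: "'a list \<Rightarrow> nat \<Rightarrow> 'a" where
  "cycle_vertex vs k = vs ! (k mod length vs)"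

definition cycle_edge :: "'a list \<Rightarrow> nat \<Rightarrow> 'a set" where
  "cycle_edge vs k = {cycle_vertex vs k, cycle_vertex vs (Suc k)}"

lemma cycle_vertex_cong: "[a = b] (mod length vs) \<Longrightarrow> cycle_vertex vs a = cycle_vertex vs b"
  by (simp add: cycle_vertex_def cong_def)

lemma cycle_edge_cong: "[a = b] (mod length vs) \<Longrightarrow> cycle_edge vs a = cycle_edge vs b"
  using cycle_vertex_cong[of a b vs] cycle_vertex_cong[of "Suc a" "Suc b" vs]
  by (simp add: cycle_edge_def cong_add_rcancel_nat[of a 1 b, simplified])

lemma cycle_vertex_mod: "cycle_vertex vs (k mod length vs) = cycle_vertex vs k"
  by (simp add: cycle_vertex_def)

lemma cycle_edge_mod: "cycle_edge vs (k mod length vs) = cycle_edge vs k"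
  by (rule cycle_edge_cong) simp

lemma cycle_vertex_add_length [simp]: "cycle_vertex vs (k + length vs) = cycle_vertex vs k"
  by (simp add: cycle_vertex_def)

lemma cycle_edge_add_length [simp]: "cycle_edge vs (k + length vs) = cycle_edge vs k"
  by (rule cycle_edge_cong) (simp add: cong_def)

lemma cycle_vertex_nth: "k < length vs \<Longrightarrow> cycle_vertex vs k = vs ! k"
  by (simp add: cycle_vertex_def)

lemma cycle_vertex_in_set: "vs \<noteq> [] \<Longrightarrow> cycle_vertex vs k \<in> set vs"
  by (simp add: cycle_vertex_def)

lemma cycle_vertex_eq_iff:
  "distinct vs \<Longrightarrow> vs \<noteq> [] \<Longrightarrow> cycle_vertex vs a = cycle_vertex vs b \<longleftrightarrow> [a = b] (mod length vs)"
  by (simp add: cycle_vertex_def cong_def nth_eq_iff_index_eq)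

lemma cycle_edge_eq_iff:
  assumes "distinct vs" "3 \<le> length vs"
  shows "cycle_edge vs a = cycle_edge vs b \<longleftrightarrow> [a = b] (mod length vs)"
proof
  assume "cycle_edge vs a = cycle_edge vs b"
  moreover have "\<not> ([a = Suc b] (mod length vs) \<and> [Suc a = b] (mod length vs))"
  proof
    assume "[a = Suc b] (mod length vs) \<and> [Suc a = b] (mod length vs)"
    then have "[b + 2 = b] (mod length vs)"
      by (metis add_2_eq_Suc' cong_sym cong_trans cong_add_rcancel_nat[of _ 1] Suc_eq_plus1)
    then have "length vs dvd 2" by (simp only: cong_add_lcancel_0_nat cong_0_iff)
    then show False using assms(2) dvd_imp_le[of "length vs" 2] by simp
  qed
  moreover have "vs \<noteq> []" using assms(2) by auto
  ultimately show "[a = b] (mod length vs)"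
    using assms(1) by (auto simp: cycle_edge_def doubleton_eq_iff cycle_vertex_eq_iff)
qed (rule cycle_edge_cong)

lemma cong_le_modulus_cases:
  fixes s t n :: nat
  assumes "s \<le> n" "t \<le> n" "[s = t] (mod n)"
  shows "s = t \<or> (s = 0 \<and> t = n) \<or> (s = n \<and> t = 0)"
  using assms by (cases "s = n"; cases "t = n") (auto simp: cong_def)

lemma inj_on_cycle_vertex:
  assumes "distinct vs" "j \<le> length vs" "cycle_vertex vs i \<noteq> cycle_vertex vs j"
  shows "inj_on (cycle_vertex vs) {i..j}"
proof (rule inj_onI)
  fix s t assume s: "s \<in> {i..j}" and t: "t \<in> {i..j}" and eq: "cycle_vertex vs s = cycle_vertex vs t"
  have "vs \<noteq> []" using s assms(2,3) by auto
  then have "[s = t] (mod length vs)" using eq cycle_vertex_eq_iff[OF assms(1)] by blast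
  then have "s = t \<or> (s = 0 \<and> t = length vs) \<or> (s = length vs \<and> t = 0)"
    using s t assms(2) by (intro cong_le_modulus_cases) auto
  moreover have "\<not> (i = 0 \<and> j = length vs)" using assms(3) cycle_vertex_add_length[of vs 0] by auto
  ultimately show "s = t" using s t assms(2) by auto
qed

lemma range_shift_periodic:
  fixes f :: "nat \<Rightarrow> 'b"
  assumes "\<And>k. f k = f (k mod n)" "0 < n"
  shows "range (\<lambda>t. f (r + t)) = range f"
proof
  show "range f \<subseteq> range (\<lambda>t. f (r + t))"
  proof
    fix x assume "x \<in> range f"
    then obtain k where x: "x = f k" by blast
    have "r \<le> r * n" using mult_le_mono2[of 1 n r] assms(2) by simp
    then have "r + (k + r * n - r) = k + r * n" by linarith
    moreover have "f (k + r * n) = f k" using assms(1)[of "k + r * n"] assms(1)[of k] by simp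
    ultimately have "f (r + (k + r * n - r)) = f k" by simp
    then show "x \<in> range (\<lambda>t. f (r + t))" using x by (metis rangeI)
  qed
qed auto

lemma range_cycle_vertex:
  assumes "vs \<noteq> []"
  shows "range (cycle_vertex vs) = set vs"
proof
  show "set vs \<subseteq> range (cycle_vertex vs)"
  proof
    fix x assume "x \<in> set vs"
    then obtain i where "i < length vs" "x = vs ! i" by (auto simp: in_set_conv_nth)
    then show "x \<in> range (cycle_vertex vs)" by (metis cycle_vertex_nth rangeI)
  qed
qed (use assms cycle_vertex_in_set in blast)

lemma range_cycle_edge:
  assumes "vs \<noteq> []"
  shows "range (cycle_edge vs) = cycle_edge vs ` {..<length vs}"
proof -
  have "cycle_edge vs k \<in> cycle_edge vs ` {..<length vs}" for k
    using assms cycle_edge_mod[of vs k] by (metis imageI lessThan_iff length_greater_0_conv mod_less_divisor)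
  then show ?thesis by blast
qed

lemma cycle_graph_ranges:
  assumes "vs \<noteq> []"
  shows "cycle_graph vs = (range (cycle_vertex vs), range (cycle_edge vs))"
proof -
  have "{{vs ! i, vs ! ((i + 1) mod length vs)} | i. i < length vs}
      = cycle_edge vs ` {..<length vs}"
    by (auto simp: cycle_edge_def cycle_vertex_def)
  then show ?thesis
    using assms by (simp add: cycle_graph_def range_cycle_vertex range_cycle_edge)
qed

lemma path_edges_map_cycle_vertex:
  "path_edges (map (cycle_vertex vs) [i..<Suc j]) = cycle_edge vs ` {i..<j}"
  unfolding path_edges_map_upt by (simp add: cycle_edge_def)

lemma take_Suc_eq_map_cycle_vertex:
  "i < length vs \<Longrightarrow> take (Suc i) vs = map (cycle_vertex vs) [0..<Suc i]"
  by (rule nth_equalityI) (auto simp: cycle_vertex_nth simp del: upt_Suc)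

lemma closed_walk_eq_map_cycle_vertex:
  assumes "vs \<noteq> []"
  shows "vs @ [hd vs] = map (cycle_vertex vs) [0..<Suc (length vs)]"
proof (rule nth_equalityI)
  fix k assume k: "k < length (vs @ [hd vs])"
  have "(vs @ [hd vs]) ! k = cycle_vertex vs k"
  proof (cases "k < length vs")
    case False
    then have "k = length vs" using k by simp
    then show ?thesis using assms by (simp add: hd_conv_nth cycle_vertex_def)
  qed (simp add: nth_append cycle_vertex_nth)
  then show "(vs @ [hd vs]) ! k = map (cycle_vertex vs) [0..<Suc (length vs)] ! k"
    using k by (simp del: upt_Suc)
qed simp

lemma cycle_graph_closed_path:
  assumes "vs \<noteq> []"
  shows "cycle_graph vs = (set vs, path_edges (vs @ [hd vs]))"
  using assms
  by (simp add: cycle_graph_ranges range_cycle_vertex range_cycle_edge lessThan_atLeast0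
      closed_walk_eq_map_cycle_vertex path_edges_map_cycle_vertex del: upt_Suc)

lemma cycle_vertex_rotate:
  "vs \<noteq> [] \<Longrightarrow> cycle_vertex (rotate r vs) t = cycle_vertex vs (r + t)"
  by (simp add: cycle_vertex_def nth_rotate mod_add_right_eq)

lemma cycle_edge_rotate:
  "vs \<noteq> [] \<Longrightarrow> cycle_edge (rotate r vs) t = cycle_edge vs (r + t)"
  by (simp add: cycle_edge_def cycle_vertex_rotate)

lemma cycle_graph_rotate: "cycle_graph (rotate r vs) = cycle_graph vs"
proof (cases "vs = []")
  case False
  have "range (\<lambda>t. cycle_vertex vs (r + t)) = range (cycle_vertex vs)"
    by (rule range_shift_periodic[where n = "length vs"])
      (use False in \<open>simp_all add: cycle_vertex_mod\<close>)
  moreover have "range (\<lambda>t. cycle_edge vs (r + t)) = range (cycle_edge vs)"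
    by (rule range_shift_periodic[where n = "length vs"])
      (use False in \<open>simp_all add: cycle_edge_mod\<close>)
  ultimately show ?thesis
    using False by (simp add: cycle_graph_ranges cycle_vertex_rotate cycle_edge_rotate)
qed simp

lemma cycle_edge_subset_vertices:
  assumes "e \<in> snd (cycle_graph vs)"
  shows "e \<subseteq> set vs"
proof -
  obtain i where "i < length vs" "e = {vs ! i, vs ! ((i + 1) mod length vs)}"
    using assms by (auto simp: cycle_graph_def)
  moreover from this(1) have "(i + 1) mod length vs < length vs" by (cases "length vs") simp_all
  ultimately show ?thesis by simp
qed

lemma cycle_edge_in_cycle_graphD:
  "cycle_edge vs k \<in> snd (cycle_graph ws) \<Longrightarrow>
    cycle_vertex vs k \<in> set ws \<and> cycle_vertex vs (Suc k) \<in> set ws"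
  using cycle_edge_subset_vertices by (fastforce simp: cycle_edge_def)

lemma cycle_edges_at_vertex:
  assumes "distinct vs" "3 \<le> length vs"
  shows "{e \<in> range (cycle_edge vs). cycle_vertex vs (Suc k) \<in> e}
    = {cycle_edge vs k, cycle_edge vs (Suc k)}"
proof -
  have ne: "vs \<noteq> []" using assms(2) by auto
  have "cycle_edge vs l \<in> {cycle_edge vs k, cycle_edge vs (Suc k)}"
    if "cycle_vertex vs (Suc k) \<in> cycle_edge vs l" for l
  proof -
    have "[l = Suc k] (mod length vs) \<or> [Suc l = Suc k] (mod length vs)"
      using that by (auto simp: cycle_edge_def cycle_vertex_eq_iff[OF assms(1) ne] cong_sym_eq)
    then have "[l = Suc k] (mod length vs) \<or> [l = k] (mod length vs)"
      using cong_add_rcancel_nat[of l 1 k] by auto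
    then show ?thesis by (auto simp: cycle_edge_eq_iff[OF assms])
  qed
  then show ?thesis by (auto simp: cycle_edge_def)
qed

lemma card_cycle_edges_at:
  assumes "distinct vs" "3 \<le> length vs" "v \<in> set vs"
  shows "card {e \<in> snd (cycle_graph vs). v \<in> e} = 2"
proof -
  have ne: "vs \<noteq> []" using assms(2) by auto
  have "range (\<lambda>t. cycle_vertex vs (1 + t)) = range (cycle_vertex vs)"
    by (rule range_shift_periodic[where n = "length vs"]) (simp_all add: cycle_vertex_mod ne)
  then have "v \<in> range (\<lambda>t. cycle_vertex vs (1 + t))"
    using assms(3) ne by (simp add: range_cycle_vertex)
  then obtain k where k: "v = cycle_vertex vs (Suc k)" by auto
  have "\<not> [k = Suc k] (mod length vs)"
  proof
    assume "[k = Suc k] (mod length vs)"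
    then have "[k + 1 = k] (mod length vs)" by (simp add: cong_sym_eq)
    then have "length vs dvd 1" by (simp only: cong_add_lcancel_0_nat cong_0_iff)
    then show False using assms(2) by simp
  qed
  then have "cycle_edge vs k \<noteq> cycle_edge vs (Suc k)"
    by (simp add: cycle_edge_eq_iff[OF assms(1,2)])
  then show ?thesis
    using cycle_edges_at_vertex[OF assms(1,2)] ne k by (simp add: cycle_graph_ranges)
qed

lemma set_subset_if_closed_under_successor:
  assumes "vs \<noteq> []" "cycle_vertex vs j \<in> S"
    and step: "\<And>k. cycle_vertex vs k \<in> S \<Longrightarrow> cycle_vertex vs (Suc k) \<in> S"
  shows "set vs \<subseteq> S"
proof -
  have "cycle_vertex vs (j + t) \<in> S" for t
    by (induction t) (use assms(2) step in auto)
  then have "range (\<lambda>t. cycle_vertex vs (j + t)) \<subseteq> S" by blast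
  moreover have "range (\<lambda>t. cycle_vertex vs (j + t)) = range (cycle_vertex vs)"
    by (rule range_shift_periodic[where n = "length vs"]) (simp_all add: cycle_vertex_mod assms(1))
  ultimately show ?thesis using range_cycle_vertex[OF assms(1)] by simp
qed

lemma cycle_graph_eq_if_edges_subset:
  assumes xs: "distinct xs" "3 \<le> length xs" and ys: "distinct ys" "3 \<le> length ys"
    and sub: "snd (cycle_graph ys) \<subseteq> snd (cycle_graph xs)"
  shows "cycle_graph ys = cycle_graph xs"
proof -
  have nx: "xs \<noteq> []" and ny: "ys \<noteq> []" using xs(2) ys(2) by auto
  have ys_xs: "set ys \<subseteq> set xs"
  proof
    fix v assume "v \<in> set ys"
    then obtain k where "v = cycle_vertex ys k" using range_cycle_vertex[OF ny] by auto
    moreover have "cycle_edge ys k \<in> snd (cycle_graph xs)"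
      using sub ny by (auto simp: cycle_graph_ranges)
    ultimately show "v \<in> set xs" using cycle_edge_in_cycle_graphD by blast
  qed
  have same_at: "{e \<in> snd (cycle_graph ys). v \<in> e} = {e \<in> snd (cycle_graph xs). v \<in> e}"
    if "v \<in> set ys" for v
  proof (rule card_subset_eq)
    show "finite {e \<in> snd (cycle_graph xs). v \<in> e}"
      using card_cycle_edges_at[OF xs] that ys_xs by (intro card_ge_0_finite) auto
    show "card {e \<in> snd (cycle_graph ys). v \<in> e} = card {e \<in> snd (cycle_graph xs). v \<in> e}"
      using card_cycle_edges_at[OF xs] card_cycle_edges_at[OF ys] that ys_xs by auto
  qed (use sub in blast)
  have edge_in_ys: "cycle_edge xs k \<in> snd (cycle_graph ys)" if "cycle_vertex xs k \<in> set ys" for k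
    using same_at[OF that] nx by (auto simp: cycle_graph_ranges cycle_edge_def)
  obtain j where "cycle_vertex xs j \<in> set ys"
    using ys_xs ny range_cycle_vertex[OF nx] by (metis imageE last_in_set subsetD)
  then have xs_ys: "set xs \<subseteq> set ys"
    using set_subset_if_closed_under_successor[OF nx] edge_in_ys cycle_edge_in_cycle_graphD by blast
  have "snd (cycle_graph xs) \<subseteq> snd (cycle_graph ys)"
    using xs_ys edge_in_ys cycle_vertex_in_set[OF nx] by (auto simp: cycle_graph_ranges[OF nx])
  then show ?thesis
    using sub xs_ys ys_xs by (simp add: prod_eq_iff cycle_graph_def)
qed

section \<open>Closing a path into an odd cycle\<close>

definition odd_cycle_list :: "'a set \<Rightarrow> 'a set set \<Rightarrow> 'a list \<Rightarrow> bool" where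
  "odd_cycle_list V E vs \<longleftrightarrow>
     distinct vs \<and> 3 \<le> length vs \<and> odd (length vs) \<and> subgraph (cycle_graph vs) (V, E)"

lemma odd_cycles_iff: "H \<in> odd_cycles V E \<longleftrightarrow> (\<exists>vs. odd_cycle_list V E vs \<and> H = cycle_graph vs)"
  by (auto simp: odd_cycles_def is_odd_cycle_def odd_cycle_list_def)

lemma odd_cycle_list_rotate: "odd_cycle_list V E (rotate r vs) \<longleftrightarrow> odd_cycle_list V E vs"
  by (simp add: odd_cycle_list_def cycle_graph_rotate)

lemma cycle_arcs_from_hd:
  assumes "distinct xs" "0 < q" "q < length xs"
  shows "path_from_to (rev (take (Suc q) xs)) (xs ! q) (hd xs)"
    and "path_from_to (drop q xs @ [hd xs]) (xs ! q) (hd xs)"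
    and "path_edges (rev (take (Suc q) xs)) \<union> path_edges (drop q xs @ [hd xs])
      = snd (cycle_graph xs)"
proof -
  have ne: "xs \<noteq> []" using assms(3) by auto
  have "take (Suc q) xs = take q xs @ [xs ! q]" using assms(3) by (rule take_Suc_conv_app_nth)
  then have "hd (rev (take (Suc q) xs)) = xs ! q" by (simp add: hd_rev)
  moreover have "last (rev (take (Suc q) xs)) = hd xs"
    using ne by (cases xs) (simp_all add: last_rev)
  ultimately show "path_from_to (rev (take (Suc q) xs)) (xs ! q) (hd xs)"
    unfolding path_from_to_def using assms(1) ne by simp
  have "hd xs \<in> set (take q xs)" using assms(2) ne by (cases xs) (auto simp: gr0_conv_Suc)
  then have "hd xs \<notin> set (drop q xs)"
    using set_take_disj_set_drop_if_distinct[OF assms(1) order_refl] by blast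
  then show "path_from_to (drop q xs @ [hd xs]) (xs ! q) (hd xs)"
    using assms by (simp add: path_from_to_def hd_drop_conv_nth)
  let ?l = "take q xs" and ?r = "drop (Suc q) xs @ [hd xs]"
  have split: "xs @ [hd xs] = ?l @ xs ! q # ?r" using id_take_nth_drop[OF assms(3)] by simp
  have left: "?l @ [xs ! q] = take (Suc q) xs" using take_Suc_conv_app_nth[OF assms(3)] by simp
  have right: "xs ! q # ?r = drop q xs @ [hd xs]" using Cons_nth_drop_Suc[OF assms(3)] by simp
  have "path_edges (xs @ [hd xs]) = path_edges (?l @ [xs ! q]) \<union> path_edges (xs ! q # ?r)"
    unfolding split by (rule path_edges_append)
  then have "path_edges (xs @ [hd xs])
      = path_edges (take (Suc q) xs) \<union> path_edges (drop q xs @ [hd xs])"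
    by (simp only: left right)
  then show "path_edges (rev (take (Suc q) xs)) \<union> path_edges (drop q xs @ [hd xs])
      = snd (cycle_graph xs)"
    using ne by (simp add: path_edges_rev cycle_graph_closed_path)
qed

lemma cycle_arcs:
  assumes "distinct xs" "a \<in> set xs" "b \<in> set xs" "a \<noteq> b"
  obtains Q1 Q2 where "path_from_to Q1 b a" "path_from_to Q2 b a"
    "set Q1 \<subseteq> set xs" "set Q2 \<subseteq> set xs"
    "length Q1 + length Q2 = length xs + 2" "path_edges Q1 \<union> path_edges Q2 = snd (cycle_graph xs)"
proof -
  obtain p where p: "p < length xs" "xs ! p = a" using assms(2) by (auto simp: in_set_conv_nth)
  define ys where "ys = rotate p xs"
  have ys: "distinct ys" "set ys = set xs" "length ys = length xs" "cycle_graph ys = cycle_graph xs"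
    by (simp_all add: ys_def cycle_graph_rotate assms(1))
  have "hd ys = a" using p by (cases xs) (simp_all add: ys_def hd_rotate_conv_nth)
  obtain q where q: "q < length ys" "ys ! q = b" using assms(3) ys(2) by (metis in_set_conv_nth)
  have "0 < q" using q \<open>hd ys = a\<close> assms(4) by (cases q) (auto simp: hd_conv_nth)
  note arcs = cycle_arcs_from_hd[OF ys(1) this q(1)]
  show thesis
  proof
    show "path_from_to (rev (take (Suc q) ys)) b a" "path_from_to (drop q ys @ [hd ys]) b a"
      using arcs q \<open>hd ys = a\<close> by simp_all
    show "set (rev (take (Suc q) ys)) \<subseteq> set xs" "set (drop q ys @ [hd ys]) \<subseteq> set xs"
      using ys(2) \<open>hd ys = a\<close> assms(2) by (auto dest: in_set_takeD in_set_dropD)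
    show "length (rev (take (Suc q) ys)) + length (drop q ys @ [hd ys]) = length xs + 2"
      using q(1) ys(3) by simp
    show "path_edges (rev (take (Suc q) ys)) \<union> path_edges (drop q ys @ [hd ys])
        = snd (cycle_graph xs)"
      using arcs ys(4) by simp
  qed
qed

lemma glue_paths_to_cycle:
  assumes P: "path_from_to P a b" and Q: "path_from_to Q b a" and "a \<noteq> b"
    and PQ: "set P \<inter> set Q \<subseteq> {a, b}"
  shows "distinct (P @ butlast (tl Q))" "length (P @ butlast (tl Q)) = length P + length Q - 2"
    "cycle_graph (P @ butlast (tl Q)) = (set P \<union> set Q, path_edges P \<union> path_edges Q)"
proof -
  obtain M where Q_eq: "Q = b # M @ [a]"
    using Q \<open>a \<noteq> b\<close> unfolding path_from_to_def
    by (metis append_butlast_last_id hd_Cons_tl last_ConsL last_ConsR)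
  obtain P' where P_eq: "P = P' @ [b]"
    using P unfolding path_from_to_def by (metis append_butlast_last_id)
  have M: "butlast (tl Q) = M" "set P \<inter> set M = {}" "distinct M"
    using Q PQ \<open>a \<noteq> b\<close> unfolding Q_eq path_from_to_def by auto
  show "distinct (P @ butlast (tl Q))" using P M unfolding path_from_to_def by simp
  show "length (P @ butlast (tl Q)) = length P + length Q - 2" using M(1) Q_eq by simp
  have "a \<in> set P" "b \<in> set P" using P unfolding path_from_to_def by auto
  then have "set (P @ M) = set P \<union> set Q" unfolding Q_eq by auto
  moreover have "path_edges (P' @ b # M @ [a]) = path_edges P \<union> path_edges Q"
    using path_edges_append[of P' b "M @ [a]"] by (simp only: P_eq Q_eq)
  moreover have "hd (P @ M) = a" "P @ M \<noteq> []" using P unfolding path_from_to_def by simp_all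
  then have "cycle_graph (P @ M) = (set (P @ M), path_edges (P' @ b # M @ [a]))"
    by (simp add: cycle_graph_closed_path P_eq)
  ultimately show "cycle_graph (P @ butlast (tl Q)) = (set P \<union> set Q, path_edges P \<union> path_edges Q)"
    using M(1) by simp
qed

lemma odd_cycle_through_path:
  assumes xs: "odd_cycle_list V E xs"
    and P: "path_from_to P a b" "a \<noteq> b" "a \<in> set xs" "b \<in> set xs" "set P \<inter> set xs \<subseteq> {a, b}"
    and PG: "set P \<subseteq> V" "path_edges P \<subseteq> E"
  shows "\<exists>D \<in> odd_cycles V E. path_edges P \<subseteq> snd D \<and> snd D \<subseteq> snd (cycle_graph xs) \<union> path_edges P"
proof -
  have xs_G: "set xs \<subseteq> V" "snd (cycle_graph xs) \<subseteq> E"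
    using xs by (auto simp: odd_cycle_list_def subgraph_def cycle_graph_def)
  obtain Q1 Q2 where Q: "path_from_to Q1 b a" "path_from_to Q2 b a"
    "set Q1 \<subseteq> set xs" "set Q2 \<subseteq> set xs"
    "length Q1 + length Q2 = length xs + 2" "path_edges Q1 \<union> path_edges Q2 = snd (cycle_graph xs)"
    using cycle_arcs[of xs a b] xs P(2-4) unfolding odd_cycle_list_def by blast
  have lengths: "2 \<le> length P" "2 \<le> length Q1" "2 \<le> length Q2"
    using path_from_to_length P(1,2) Q(1,2) by (metis)+
  \<comment> \<open>The two arcs have lengths adding up to the odd number length xs + 2, so one of
    them closes P into an odd cycle.\<close>
  have "odd (length xs)" using xs unfolding odd_cycle_list_def by blast
  moreover have
    "(length P + length Q1 - 2) + (length P + length Q2 - 2) = 2 * (length P - 1) + length xs"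
    using Q(5) lengths by linarith
  ultimately have "odd (length P + length Q1 - 2) \<or> odd (length P + length Q2 - 2)"
    by (metis even_add even_mult_iff even_numeral)
  then obtain Q where Q: "path_from_to Q b a" "set Q \<subseteq> set xs" "path_edges Q \<subseteq> snd (cycle_graph xs)"
    "odd (length P + length Q - 2)" "2 \<le> length Q"
    using Q lengths by blast
  let ?vs = "P @ butlast (tl Q)"
  note glued = glue_paths_to_cycle[OF P(1) Q(1) P(2)]
  have "set P \<inter> set Q \<subseteq> {a, b}" using P(5) Q(2) by blast
  then have vs: "distinct ?vs" "length ?vs = length P + length Q - 2"
    "cycle_graph ?vs = (set P \<union> set Q, path_edges P \<union> path_edges Q)"
    using glued by blast+
  moreover have "3 \<le> length ?vs" using vs(2) Q(4,5) lengths(1) by presburger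
  ultimately have "odd_cycle_list V E ?vs"
    unfolding odd_cycle_list_def subgraph_def using Q PG xs_G by auto
  then have "cycle_graph ?vs \<in> odd_cycles V E" by (auto simp: odd_cycles_iff)
  moreover have "path_edges P \<subseteq> snd (cycle_graph ?vs)"
    "snd (cycle_graph ?vs) \<subseteq> snd (cycle_graph xs) \<union> path_edges P"
    using vs(3) Q(3) by auto
  ultimately show ?thesis by blast
qed

section \<open>Detours of one odd cycle away from another\<close>

locale odd_cycle_pair =
  fixes V :: "'a set" and E :: "'a set set" and xs ys :: "'a list"
  assumes xs: "odd_cycle_list V E xs" and ys: "odd_cycle_list V E ys"
begin

lemma xs_distinct: "distinct xs" and xs_length: "3 \<le> length xs"
  and ys_distinct: "distinct ys" and ys_length: "3 \<le> length ys" and ys_ne: "ys \<noteq> []"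
  using xs ys by (auto simp: odd_cycle_list_def)

lemma cycle_vertex_inj:
  "cycle_vertex ys a = cycle_vertex ys b \<Longrightarrow> a < length ys \<Longrightarrow> b < length ys \<Longrightarrow> a = b"
  using cycle_vertex_eq_iff[OF ys_distinct ys_ne] cong_less_modulus_unique_nat by blast

lemma cycle_edge_inj:
  "cycle_edge ys a = cycle_edge ys b \<Longrightarrow> a < length ys \<Longrightarrow> b < length ys \<Longrightarrow> a = b"
  using cycle_edge_eq_iff[OF ys_distinct ys_length] cong_less_modulus_unique_nat by blast

(* Position length ys is position 0 again, so a detour may end where ys starts. The condition on
   the first edge makes a chord of xs, with j = Suc i, a detour as well. *)
definition detour :: "nat \<Rightarrow> nat \<Rightarrow> bool" where
  "detour i j \<longleftrightarrow> i < j \<and> j \<le> length ys \<and> cycle_vertex ys i \<in> set xs \<and> cycle_vertex ys j \<in> set xs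
     \<and> (\<forall>t. i < t \<and> t < j \<longrightarrow> cycle_vertex ys t \<notin> set xs)
     \<and> cycle_edge ys i \<notin> snd (cycle_graph xs)"

lemma detour_edge_outside:
  assumes "detour i j" "i \<le> k" "k < j"
  shows "cycle_edge ys k \<notin> snd (cycle_graph xs)"
proof (cases "k = i")
  case False
  then have "cycle_vertex ys k \<notin> set xs" using assms unfolding detour_def by auto
  then show ?thesis using cycle_edge_in_cycle_graphD by blast
qed (use assms in \<open>simp add: detour_def\<close>)

lemma detour_odd_cycle:
  assumes det: "detour i j" and ends: "cycle_vertex ys i \<noteq> cycle_vertex ys j"
  shows "\<exists>D \<in> odd_cycles V E. cycle_edge ys ` {i..<j} \<subseteq> snd D
           \<and> snd D \<subseteq> snd (cycle_graph xs) \<union> cycle_edge ys ` {i..<j}"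
proof -
  let ?P = "map (cycle_vertex ys) [i..<Suc j]"
  have ij: "i < j" "j \<le> length ys" using det unfolding detour_def by auto
  have "distinct ?P"
    using inj_on_cycle_vertex[OF ys_distinct ij(2) ends]
    by (simp add: distinct_map atLeastLessThanSuc_atLeastAtMost del: upt_Suc)
  moreover have "hd ?P = cycle_vertex ys i" "last ?P = cycle_vertex ys j" "?P \<noteq> []"
    using ij by (simp_all add: hd_map last_map del: upt_Suc)
  ultimately have P: "path_from_to ?P (cycle_vertex ys i) (cycle_vertex ys j)"
    by (simp add: path_from_to_def)
  have P_xs: "set ?P \<inter> set xs \<subseteq> {cycle_vertex ys i, cycle_vertex ys j}"
  proof
    fix v assume "v \<in> set ?P \<inter> set xs"
    then obtain t where "i \<le> t" "t \<le> j" "v = cycle_vertex ys t" "v \<in> set xs"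
      by (auto simp del: upt_Suc)
    then show "v \<in> {cycle_vertex ys i, cycle_vertex ys j}"
      using det unfolding detour_def by (metis insertCI le_neq_implies_less)
  qed
  have P_G: "set ?P \<subseteq> V" "path_edges ?P \<subseteq> E"
    using ys ys_ne cycle_vertex_in_set[OF ys_ne]
    by (auto simp: odd_cycle_list_def subgraph_def path_edges_map_cycle_vertex cycle_graph_ranges
        simp del: upt_Suc)
  have "cycle_vertex ys i \<in> set xs" "cycle_vertex ys j \<in> set xs"
    using det unfolding detour_def by auto
  from odd_cycle_through_path[OF xs P ends this P_xs P_G]
  show ?thesis by (simp add: path_edges_map_cycle_vertex del: upt_Suc)
qed

lemma exists_detour:
  assumes start: "cycle_vertex ys 0 \<in> set xs" "cycle_vertex ys k \<in> set xs"
    and l: "k \<le> l" "l < length ys" "cycle_edge ys l \<notin> snd (cycle_graph xs)"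
  shows "\<exists>i j. detour i j \<and> k \<le> i \<and> i \<le> l \<and> l < j"
proof -
  define S where "S = {t. k \<le> t \<and> t \<le> l \<and> cycle_vertex ys t \<in> set xs}"
  define T where "T = {t. l < t \<and> t \<le> length ys \<and> cycle_vertex ys t \<in> set xs}"
  define i where "i = Max S"
  define j where "j = Min T"
  have "finite S" unfolding S_def by (rule finite_subset[of _ "{..l}"]) auto
  moreover have "k \<in> S" unfolding S_def using start(2) l(1) by simp
  ultimately have "i \<in> S" and i_max: "\<And>t. t \<in> S \<Longrightarrow> t \<le> i"
    unfolding i_def using Max_in Max_ge by blast+
  then have i: "k \<le> i" "i \<le> l" "cycle_vertex ys i \<in> set xs" unfolding S_def by auto
  have "finite T" unfolding T_def by (rule finite_subset[of _ "{..length ys}"]) auto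
  moreover have "length ys \<in> T"
    unfolding T_def using start(1) l(2) cycle_vertex_add_length[of ys 0] by simp
  ultimately have "j \<in> T" and j_min: "\<And>t. t \<in> T \<Longrightarrow> j \<le> t"
    unfolding j_def using Min_in Min_le by blast+
  then have j: "l < j" "j \<le> length ys" "cycle_vertex ys j \<in> set xs" unfolding T_def by auto
  have gap: "cycle_vertex ys t \<notin> set xs" if "i < t" "t < j" for t
    using i_max[of t] j_min[of t] that i(1) j(2) unfolding S_def T_def by fastforce
  have "cycle_edge ys i \<notin> snd (cycle_graph xs)"
  proof (cases "i = l")
    case False
    then have "cycle_vertex ys (Suc i) \<notin> set xs" using gap i(2) j(1) by auto
    then show ?thesis using cycle_edge_in_cycle_graphD by blast
  qed (use l(3) in simp)
  then have "detour i j" unfolding detour_def using i j gap by auto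
  then show ?thesis using i j by blast
qed

lemma two_detours:
  assumes fin: "finite (odd_cycles V E)"
    and det: "detour i j" "detour i' j'" "j \<le> i'"
    and ends: "cycle_vertex ys i \<noteq> cycle_vertex ys j" "cycle_vertex ys i' \<noteq> cycle_vertex ys j'"
  shows "4 \<le> card (odd_cycles V E)"
proof -
  obtain D where D: "D \<in> odd_cycles V E" "cycle_edge ys ` {i..<j} \<subseteq> snd D"
    "snd D \<subseteq> snd (cycle_graph xs) \<union> cycle_edge ys ` {i..<j}"
    using detour_odd_cycle[OF det(1) ends(1)] by blast
  obtain D' where D': "D' \<in> odd_cycles V E" "cycle_edge ys ` {i'..<j'} \<subseteq> snd D'"
    "snd D' \<subseteq> snd (cycle_graph xs) \<union> cycle_edge ys ` {i'..<j'}"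
    using detour_odd_cycle[OF det(2) ends(2)] by blast
  have ij: "i < j" "j \<le> length ys" "i' < j'" "j' \<le> length ys"
    using det unfolding detour_def by auto
  have outside: "cycle_edge ys i \<notin> snd (cycle_graph xs)" "cycle_edge ys i' \<notin> snd (cycle_graph xs)"
    using det unfolding detour_def by auto
  \<comment> \<open>Each new cycle contains the first edge of its own detour, which lies neither in xs
    nor in the other new cycle.\<close>
  have in_D: "cycle_edge ys i \<in> snd D" "cycle_edge ys i' \<in> snd D'"
    using D(2) D'(2) ij by auto
  have "cycle_edge ys i' \<notin> snd D"
  proof
    assume "cycle_edge ys i' \<in> snd D"
    then obtain k where "k \<in> {i..<j}" "cycle_edge ys i' = cycle_edge ys k"
      using D(3) outside(2) by auto
    then show False using cycle_edge_inj ij det(3) by (metis atLeastLessThan_iff leD less_le_trans)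
  qed
  moreover have "cycle_edge ys i \<notin> snd D'"
  proof
    assume "cycle_edge ys i \<in> snd D'"
    then obtain k where "k \<in> {i'..<j'}" "cycle_edge ys i = cycle_edge ys k"
      using D'(3) outside(1) by auto
    then show False using cycle_edge_inj ij det(3) by (metis atLeastLessThan_iff leD less_le_trans)
  qed
  moreover have "cycle_edge ys i \<in> snd (cycle_graph ys)" "cycle_edge ys i' \<in> snd (cycle_graph ys)"
    using ys_ne by (simp_all add: cycle_graph_ranges)
  ultimately have "cycle_graph xs \<noteq> cycle_graph ys" "cycle_graph xs \<noteq> D" "cycle_graph xs \<noteq> D'"
    "cycle_graph ys \<noteq> D" "cycle_graph ys \<noteq> D'" "D \<noteq> D'"
    using in_D outside by auto
  then have "card {cycle_graph xs, cycle_graph ys, D, D'} = 4" by simp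
  moreover have "{cycle_graph xs, cycle_graph ys, D, D'} \<subseteq> odd_cycles V E"
    using xs ys D(1) D'(1) by (auto simp: odd_cycles_iff)
  ultimately show ?thesis using card_mono[OF fin] by metis
qed

lemma edges_before_final_detour:
  assumes three: "card (odd_cycles V E) = 3" and start: "cycle_vertex ys 0 \<in> set xs"
    and final: "detour i (length ys)" and "k < i"
  shows "cycle_edge ys k \<in> snd (cycle_graph xs)"
proof (rule ccontr)
  assume outside: "cycle_edge ys k \<notin> snd (cycle_graph xs)"
  have i: "i < length ys" "cycle_vertex ys i \<in> set xs" using final unfolding detour_def by auto
  obtain i' j' where det: "detour i' j'" "i' \<le> k" "k < j'"
    using exists_detour[OF start start, of k] outside i(1) \<open>k < i\<close> by auto
  have "j' \<le> i"
  proof (rule ccontr)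
    assume "\<not> j' \<le> i"
    then show False using det i(2) \<open>k < i\<close> unfolding detour_def by auto
  qed
  then have "cycle_vertex ys i' \<noteq> cycle_vertex ys j'"
    using det(1) i(1) cycle_vertex_inj unfolding detour_def by fastforce
  moreover have "cycle_vertex ys i \<noteq> cycle_vertex ys (length ys)"
    using i(1) \<open>k < i\<close> ys_ne cycle_vertex_inj[of i 0] cycle_vertex_add_length[of ys 0] by auto
  moreover have "finite (odd_cycles V E)" using three by (intro card_ge_0_finite) simp
  ultimately have "4 \<le> card (odd_cycles V E)"
    using two_detours det(1) final \<open>j' \<le> i\<close> by blast
  then show False using three by simp
qed

lemma exists_outside_edge:
  assumes "cycle_graph xs \<noteq> cycle_graph ys"
  shows "\<exists>l. cycle_edge ys l \<notin> snd (cycle_graph xs)"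
proof -
  have "\<not> snd (cycle_graph ys) \<subseteq> snd (cycle_graph xs)"
    using cycle_graph_eq_if_edges_subset[OF xs_distinct xs_length ys_distinct ys_length] assms
    by auto
  then show ?thesis using ys_ne by (auto simp: cycle_graph_ranges)
qed

lemma exists_outside_edge_entering_xs:
  assumes "v \<in> set xs" "v \<in> set ys" "cycle_edge ys l \<notin> snd (cycle_graph xs)"
  shows "\<exists>k. cycle_vertex ys (Suc k) \<in> set xs \<and> cycle_edge ys k \<notin> snd (cycle_graph xs)"
proof -
  obtain r where "v = cycle_vertex ys r" using assms(2) range_cycle_vertex[OF ys_ne] by auto
  moreover have "cycle_vertex ys (r + Suc l * length ys) = cycle_vertex ys r"
    by (simp only: cycle_vertex_def mod_mult_self1)
  ultimately have "cycle_vertex ys (r + Suc l * length ys) \<in> set xs"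
    using assms(1) by simp
  moreover have "l < r + Suc l * length ys"
    using mult_le_mono2[of 1 "length ys" "Suc l"] ys_length by simp
  ultimately have ex: "\<exists>t. l < t \<and> cycle_vertex ys t \<in> set xs" by blast
  define j where "j = (LEAST t. l < t \<and> cycle_vertex ys t \<in> set xs)"
  have j: "l < j" "cycle_vertex ys j \<in> set xs"
    using LeastI_ex[OF ex] unfolding j_def by auto
  have gap: "cycle_vertex ys t \<notin> set xs" if "l < t" "t < j" for t
    using not_less_Least[of t] that unfolding j_def by blast
  obtain k where k: "j = Suc k" using j(1) by (cases j) auto
  have "cycle_edge ys k \<notin> snd (cycle_graph xs)"
    using assms(3) gap[of k] cycle_edge_in_cycle_graphD k j(1) by (cases "k = l") auto
  then show ?thesis using j(2) k by blast
qed

lemma inter_is_path_if_closing_edge_enters: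
  assumes three: "card (odd_cycles V E) = 3" and start: "cycle_vertex ys 0 \<in> set xs"
    and entering: "cycle_edge ys (length ys - 1) \<notin> snd (cycle_graph xs)"
  shows "is_path (graph_inter (cycle_graph xs) (cycle_graph ys))"
proof -
  let ?m = "length ys"
  obtain i j where det: "detour i j" "i \<le> ?m - 1" "?m - 1 < j"
    using exists_detour[OF start start, of "?m - 1"] entering ys_ne by auto
  then have "j = ?m" using ys_ne unfolding detour_def by auto
  then have final: "detour i ?m" and i: "i < ?m" using det unfolding detour_def by auto
  note before = edges_before_final_detour[OF three start final]
  have on_xs: "cycle_vertex ys s \<in> set xs" if "s \<le> i" for s
  proof (cases s)
    case (Suc r)
    then show ?thesis using before[of r] that cycle_edge_in_cycle_graphD by auto
  qed (use start in simp)
  have "set xs \<inter> set ys = cycle_vertex ys ` {0..<Suc i}"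
  proof
    show "set xs \<inter> set ys \<subseteq> cycle_vertex ys ` {0..<Suc i}"
    proof
      fix v assume v: "v \<in> set xs \<inter> set ys"
      then obtain s where s: "s < ?m" "v = cycle_vertex ys s"
        by (auto simp: in_set_conv_nth cycle_vertex_nth)
      have "s \<le> i" using final s v unfolding detour_def by (meson IntD1 not_le_imp_less)
      then show "v \<in> cycle_vertex ys ` {0..<Suc i}" using s by auto
    qed
  qed (use on_xs cycle_vertex_in_set[OF ys_ne] in auto)
  moreover have "snd (cycle_graph xs) \<inter> snd (cycle_graph ys) = cycle_edge ys ` {0..<i}"
  proof
    show "snd (cycle_graph xs) \<inter> snd (cycle_graph ys) \<subseteq> cycle_edge ys ` {0..<i}"
    proof
      fix e assume e: "e \<in> snd (cycle_graph xs) \<inter> snd (cycle_graph ys)"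
      then obtain k where k: "k < ?m" "e = cycle_edge ys k"
        by (auto simp: cycle_graph_ranges[OF ys_ne] range_cycle_edge[OF ys_ne])
      have "k < i" using detour_edge_outside[OF final, of k] e k by (meson IntD1 not_le_imp_less)
      then show "e \<in> cycle_edge ys ` {0..<i}" using k by auto
    qed
  qed (use before in \<open>auto simp: cycle_graph_ranges[OF ys_ne]\<close>)
  ultimately have "graph_inter (cycle_graph xs) (cycle_graph ys) = path_graph (take (Suc i) ys)"
    using i by (simp add: graph_inter_def cycle_graph_def path_graph_eq take_Suc_eq_map_cycle_vertex
        path_edges_map_cycle_vertex del: upt_Suc)
  then show ?thesis
    unfolding is_path_def using ys_distinct ys_ne by (metis distinct_take take_eq_Nil2 nat.distinct(1))
qed

lemma inter_is_path_if_edge_enters: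
  assumes three: "card (odd_cycles V E) = 3"
    and "cycle_vertex ys (Suc k) \<in> set xs" "cycle_edge ys k \<notin> snd (cycle_graph xs)"
  shows "is_path (graph_inter (cycle_graph xs) (cycle_graph ys))"
proof -
  define zs where "zs = rotate (Suc k) ys"
  have "odd_cycle_list V E zs" unfolding zs_def using ys by (simp only: odd_cycle_list_rotate)
  with xs interpret rotated: odd_cycle_pair V E xs zs by unfold_locales
  have "Suc k + (length ys - 1) = k + length ys" using ys_ne by simp
  then have "cycle_vertex zs 0 = cycle_vertex ys (Suc k)"
    "cycle_edge zs (length zs - 1) = cycle_edge ys k"
    unfolding zs_def cycle_vertex_rotate[OF ys_ne] cycle_edge_rotate[OF ys_ne] length_rotate
    by (simp_all only: add_0_right cycle_edge_add_length)
  then have "is_path (graph_inter (cycle_graph xs) (cycle_graph zs))"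
    using rotated.inter_is_path_if_closing_edge_enters[OF three] assms(2,3) by simp
  moreover have "cycle_graph zs = cycle_graph ys" unfolding zs_def by (rule cycle_graph_rotate)
  ultimately show ?thesis by simp
qed

end

theorem lemma2p3:
  fixes V :: "'a set" and E :: "'a set set"
  assumes "simple_graph V E"
    and "card (odd_cycles V E) = 3"
    and "C1 \<in> odd_cycles V E" and "C2 \<in> odd_cycles V E" and "C1 \<noteq> C2"
  shows "fst (graph_inter C1 C2) = {} \<or> is_path (graph_inter C1 C2)"
proof -
  obtain xs ys where xs: "odd_cycle_list V E xs" and C1: "C1 = cycle_graph xs"
    and ys: "odd_cycle_list V E ys" and C2: "C2 = cycle_graph ys"
    using assms(3,4) by (auto simp: odd_cycles_iff)
  interpret odd_cycle_pair V E xs ys using xs ys by unfold_locales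
  consider "set xs \<inter> set ys = {}" | v where "v \<in> set xs" "v \<in> set ys" by blast
  then show ?thesis
  proof cases
    case 1
    then show ?thesis by (simp add: C1 C2 graph_inter_def cycle_graph_def)
  next
    case (2 v)
    obtain l where "cycle_edge ys l \<notin> snd (cycle_graph xs)"
      using exists_outside_edge assms(5) C1 C2 by blast
    then obtain k where "cycle_vertex ys (Suc k) \<in> set xs" "cycle_edge ys k \<notin> snd (cycle_graph xs)"
      using exists_outside_edge_entering_xs[OF 2] by blast
    then show ?thesis using inter_is_path_if_edge_enters[OF assms(2)] C1 C2 by simp
  qed
qed

end
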